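(* Let $n\ge 2$ and $1\le k<n$. Consider the following class of mechanisms (called Ideal-TFRMs). For every bid vector $b=(b_1,\dots,b_n)\in\mathbb{R}_{\ge 0}^n$ of the $n$ included transactions, ordered so that $b_1\ge b_2\ge\dots\ge b_n$, users $1,\dots,k$ are confirmed and each confirmed user pays the VCG payment $b_{k+1}$ minus a rebate. Rebates are given by a single (anonymous) function $g:\mathbb{R}_{\ge 0}^{n-1}\to\mathbb{R}$ via $$r_i=g(b_1,\dots,b_{i-1},b_{i+1},\dots,b_n),\qquad i=1,\dots,n,$$ and the mechanism is required to satisfy, for every ordered bid vector: $r_i=0$ for all $i\in\{k+1,\dots,n\}$ (included but unconfirmed users receive no rebate) and $r_i\le b_{k+1}$ for all $i\in\{1,\dots,k\}$. Then no such mechanism guarantees a strictly positive worst-case redistribution index; that is, $$e_{\mathsf{wc}}=\inf_{b:\,k\,b_{k+1}\neq 0}\frac{\sum_{i=1}^n r_i}{k\,b_{k+1}}$$ is not strictly positive.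
   Context: The setting models a blockchain block containing $n$ included transactions, each belonging to a distinct user who submits a bid; the $k$ highest bids are confirmed. The total VCG payment collected is $k\,b_{k+1}$. The requirement that $r_i$ depend only on the other users' bids (in sorted order) through a common function $g$ is the characterization of deterministic, anonymous, user-incentive-compatible rebate functions. The worst-case redistribution index is the infimum, over bid vectors with nonzero total VCG payment, of the fraction of that payment returned as rebates. *)

theory Defs
  imports Complex_Main "HOL-Library.Extended_Real"
begin

text \<open>Bid vectors are lists of length n, indexed 0..n-1; user i+1 of the paper is index i.
  An ordered bid vector is nonnegative and sorted in non-increasing order.\<close>
definition ordered_bids :: "nat \<Rightarrow> real list \<Rightarrow> bool" where
  "ordered_bids n b \<longleftrightarrow> length b = n \<and> (\<forall>x\<in>set b. 0 \<le> x) \<and> sorted_wrt (\<ge>) b"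

definition others :: "real list \<Rightarrow> nat \<Rightarrow> real list" where
  "others b i = take i b @ drop (Suc i) b"

definition rebate :: "(real list \<Rightarrow> real) \<Rightarrow> real list \<Rightarrow> nat \<Rightarrow> real" where
  "rebate g b i = g (others b i)"

text \<open>Ideal-TFRM: for every ordered bid vector, unconfirmed users (indices k..n-1) get no rebate,
  and confirmed users (indices 0..k-1) get rebate at most the VCG price b_{k+1} = b ! k.\<close>
definition ideal_tfrm :: "nat \<Rightarrow> nat \<Rightarrow> (real list \<Rightarrow> real) \<Rightarrow> bool" where
  "ideal_tfrm n k g \<longleftrightarrow>
     (\<forall>b. ordered_bids n b \<longrightarrow>
        (\<forall>i\<in>{k..<n}. rebate g b i = 0) \<and> (\<forall>i<k. rebate g b i \<le> b ! k))"

definition e_wc :: "nat \<Rightarrow> nat \<Rightarrow> (real list \<Rightarrow> real) \<Rightarrow> ereal" where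
  "e_wc n k g = (INF b \<in> {b. ordered_bids n b \<and> real k * b ! k \<noteq> 0}.
                   ereal ((\<Sum>i<n. rebate g b i) / (real k * b ! k)))"

end

theory Submission
  imports Defs
begin

text \<open>On a constant bid vector every user sees the same vector of other bids, so all users
  receive the same rebate. An unconfirmed user exists because \<open>k < n\<close>, and its rebate is
  zero; hence the total rebate vanishes while the VCG payment \<open>k\<close> is positive, which
  puts a ratio \<open>0\<close> into the infimum defining the worst-case redistribution index.\<close>

lemma others_replicate: "i < n \<Longrightarrow> others (replicate n x) i = replicate (n - 1) x"
  unfolding others_def by (simp add: replicate_add[symmetric])

lemma rebate_replicate: "i < n \<Longrightarrow> rebate g (replicate n x) i = g (replicate (n - 1) x)"
  by (simp add: rebate_def others_replicate)

lemma ordered_bids_replicate: "0 \<le> x \<Longrightarrow> ordered_bids n (replicate n x)"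
  unfolding ordered_bids_def by (simp add: sorted_wrt_iff_nth_less)

lemma ideal_tfrm_rebate_sum_replicate:
  assumes "ideal_tfrm n k g" and "k < n" and "0 \<le> x"
  shows "(\<Sum>i<n. rebate g (replicate n x) i) = 0"
proof -
  have "rebate g (replicate n x) k = 0"
    using assms ordered_bids_replicate unfolding ideal_tfrm_def by auto
  then have "g (replicate (n - 1) x) = 0"
    using \<open>k < n\<close> by (simp add: rebate_replicate)
  then show ?thesis
    by (simp add: rebate_replicate)
qed

lemma e_wc_le_ratio:
  assumes "ordered_bids n b" and "real k * b ! k \<noteq> 0"
  shows "e_wc n k g \<le> ereal ((\<Sum>i<n. rebate g b i) / (real k * b ! k))"
  unfolding e_wc_def using assms by (intro INF_lower) simp

theorem theorem2:
  fixes n k :: nat and g :: "real list \<Rightarrow> real"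
  assumes "n \<ge> 2" and "1 \<le> k" and "k < n"
    and "ideal_tfrm n k g"
  shows "\<not> (e_wc n k g > 0)"
proof -
  let ?b = "replicate n (1::real)"
  have "real k * ?b ! k \<noteq> 0"
    using \<open>1 \<le> k\<close> \<open>k < n\<close> by simp
  then have "e_wc n k g \<le> ereal ((\<Sum>i<n. rebate g ?b i) / (real k * ?b ! k))"
    by (intro e_wc_le_ratio ordered_bids_replicate) simp_all
  also have "\<dots> = 0"
    using ideal_tfrm_rebate_sum_replicate[OF \<open>ideal_tfrm n k g\<close> \<open>k < n\<close>]
    by (simp add: zero_ereal_def)
  finally show ?thesis
    by simp
qed

end
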